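(* Let $t$ be the Thue-Morse word and $PPL_t$ its prefix palindromic length function. Then for all integers $n\geq 0$: \begin{align*} PPL_t(4n)&=PPL_t(n),\\ PPL_t(4n+1)&=PPL_t(n)+1,\\ PPL_t(4n+2)&=\min(PPL_t(n),PPL_t(n+1))+2,\\ PPL_t(4n+3)&=PPL_t(n+1)+1. \end{align*}
   Context: A palindrome is a finite word $p=p[1]\cdots p[n]$ with $p[i]=p[n-i+1]$ for all $i$. The palindromic length of a finite word $s$ is the minimal number $k$ such that $s$ is a concatenation of $k$ nonempty palindromes (the empty word has palindromic length $0$). For an infinite word $u=u[1]u[2]\cdots$, $PPL_u(n)$ denotes the palindromic length of its prefix $u[1]\cdots u[n]$ of length $n$, with $PPL_u(0)=0$. The Thue-Morse word $t=abbabaabbaababba\cdots$ is the fixed point starting with $a$ of the morphism $\tau: a\mapsto abba,\ b\mapsto baab$. *)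

theory Defs
  imports Main
begin

text \<open>Letters: a is False, b is True.\<close>

definition palindrome :: "'a list \<Rightarrow> bool" where
  "palindrome p \<longleftrightarrow> rev p = p"

definition pal_length :: "'a list \<Rightarrow> nat" where
  "pal_length s = (LEAST k. \<exists>ps. length ps = k \<and> concat ps = s \<and>
                       (\<forall>p\<in>set ps. p \<noteq> [] \<and> palindrome p))"

definition PPL :: "(nat \<Rightarrow> 'a) \<Rightarrow> nat \<Rightarrow> nat" where
  "PPL u n = pal_length (map u [0..<n])"

definition tau_letter :: "bool \<Rightarrow> bool list" where
  "tau_letter x = [x, \<not> x, \<not> x, x]"

definition tau :: "bool list \<Rightarrow> bool list" where
  "tau w = concat (map tau_letter w)"

text \<open>The Thue-Morse word, 0-indexed: letter i (i.e. t[i+1]) is the i-th letter of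
  tau^(i+1)(a), a prefix of the fixed point of length 4^(i+1) > i.\<close>
definition thue_morse :: "nat \<Rightarrow> bool" where
  "thue_morse i = (tau ^^ Suc i) [False] ! i"

end

theory Submission
  imports Defs
begin

(* The prefix palindromic length of any word u satisfies the recurrence
   PPL(m) = 1 + min { PPL(j) | j < m, u[j..m) is a palindrome },  PPL(0) = 0,
   and is its unique solution.  The palindromes of the Thue-Morse word t are rigid: apart from
   those of length 1 and 3, the palindromic factors of t are exactly the factors t[4a+c..4b-c)
   with c < 4 and t[a..b) a palindromic factor, because t[4q..4q+4) = tau(t[q]) and
   tau(x) reads the same at positions r and 3 - r.  Hence the right-hand sides of the four
   identities, read as a function of m = 4n + r, satisfy the same recurrence. *)

abbreviation palindromic_parts :: "'a list list \<Rightarrow> bool" where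
  "palindromic_parts ps \<equiv> \<forall>p\<in>set ps. p \<noteq> [] \<and> palindrome p"

lemma pal_length_witness:
  obtains ps where "length ps = pal_length s" "concat ps = s" "palindromic_parts ps"
proof -
  have "\<exists>ps. length ps = length s \<and> concat ps = s \<and> palindromic_parts ps"
    by (rule exI[of _ "map (\<lambda>x. [x]) s"]) (auto simp: palindrome_def)
  then have "\<exists>ps. length ps = pal_length s \<and> concat ps = s \<and> palindromic_parts ps"
    unfolding pal_length_def by (rule LeastI_ex[OF exI])
  then show ?thesis using that by blast
qed

lemma pal_length_le:
  "concat ps = s \<Longrightarrow> palindromic_parts ps \<Longrightarrow> pal_length s \<le> length ps"
  unfolding pal_length_def by (rule Least_le) auto

lemma pal_length_append_palindrome:
  assumes "p \<noteq> []" "palindrome p"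
  shows "pal_length (s @ p) \<le> pal_length s + 1"
proof -
  obtain ps where "length ps = pal_length s" "concat ps = s" "palindromic_parts ps"
    by (rule pal_length_witness)
  with assms pal_length_le[of "ps @ [p]" "s @ p"] show ?thesis by auto
qed

lemma pal_length_last_palindrome:
  assumes "s \<noteq> []"
  obtains s' p where "s = s' @ p" "p \<noteq> []" "palindrome p" "pal_length s = pal_length s' + 1"
proof -
  obtain ps where ps: "length ps = pal_length s" "concat ps = s" "palindromic_parts ps"
    by (rule pal_length_witness)
  with assms obtain ps' p where "ps = ps' @ [p]" by (metis concat.simps(1) rev_exhaust)
  with ps have "s = concat ps' @ p" "p \<noteq> []" "palindrome p" by auto
  moreover have "pal_length (concat ps') \<le> length ps'"
    using ps \<open>ps = ps' @ [p]\<close> by (intro pal_length_le) auto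
  ultimately show ?thesis
    using that ps \<open>ps = ps' @ [p]\<close> pal_length_append_palindrome[of p "concat ps'"] by fastforce
qed

definition pal_factor :: "(nat \<Rightarrow> 'a) \<Rightarrow> nat \<Rightarrow> nat \<Rightarrow> bool" where
  "pal_factor u j m \<longleftrightarrow> (\<forall>k < m - j. u (j + k) = u (m - 1 - k))"

lemma palindrome_map_upt_iff: "palindrome (map u [j..<m]) \<longleftrightarrow> pal_factor u j m"
  by (auto simp: palindrome_def pal_factor_def list_eq_iff_nth_eq rev_nth)

lemma pal_factor_Suc: "pal_factor u j (Suc j)"
  by (simp add: pal_factor_def)

lemma pal_factor_inner: "pal_factor u j m \<Longrightarrow> pal_factor u (j + 1) (m - 1)"
  unfolding pal_factor_def
proof (intro allI impI)
  fix k assume pal: "\<forall>k<m - j. u (j + k) = u (m - 1 - k)" and "k < m - 1 - (j + 1)"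
  then have "k + 1 < m - j" by simp
  with pal have "u (j + (k + 1)) = u (m - 1 - (k + 1))" by blast
  then show "u (j + 1 + k) = u (m - 1 - 1 - k)" by (simp add: add.commute add.left_commute)
qed

lemma PPL_0 [simp]: "PPL u 0 = 0"
  using pal_length_le[of "[]" "[]"] by (simp add: PPL_def)

lemma map_upt_split: "j \<le> m \<Longrightarrow> map u [0..<m] = map u [0..<j] @ map u [j..<m]"
  by (metis map_append le0 upt_add_eq_append le_add_diff_inverse)

lemma PPL_le_pal_factor: "j < m \<Longrightarrow> pal_factor u j m \<Longrightarrow> PPL u m \<le> PPL u j + 1"
  using pal_length_append_palindrome[of "map u [j..<m]" "map u [0..<j]"] map_upt_split[of j m u]
  by (simp add: PPL_def palindrome_map_upt_iff)

lemma PPL_last_pal_factor: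
  assumes "0 < m"
  obtains j where "j < m" "pal_factor u j m" "PPL u m = PPL u j + 1"
proof -
  obtain s p where sp: "map u [0..<m] = s @ p" "p \<noteq> []" "palindrome p"
    "pal_length (map u [0..<m]) = pal_length s + 1"
    using assms pal_length_last_palindrome[of "map u [0..<m]"] by auto
  define j where "j = length s"
  have "j < m" using sp j_def by (metis length_append length_map length_upt less_add_same_cancel1
        length_greater_0_conv minus_nat.diff_0)
  moreover have "s = map u [0..<j]" "p = map u [j..<m]"
    using sp \<open>j < m\<close> map_upt_split[of j m u] j_def by simp_all
  ultimately show ?thesis using that sp by (simp add: PPL_def palindrome_map_upt_iff)
qed

lemma PPL_Suc_le: "PPL u (Suc n) \<le> PPL u n + 1"
  using PPL_le_pal_factor[OF lessI pal_factor_Suc] .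

lemma PPL_le_inner_pal_factor:
  assumes "pal_factor u j m" "j + 1 < m"
  shows "PPL u (m - 1) \<le> PPL u (j + 1) + 1"
proof (cases "j + 2 = m")
  case False
  with assms show ?thesis using PPL_le_pal_factor[OF _ pal_factor_inner[OF assms(1)]] by simp
qed auto

lemma PPL_eqI:
  assumes "f 0 = 0"
    and "\<And>j m. j < m \<Longrightarrow> pal_factor u j m \<Longrightarrow> f m \<le> f j + 1"
    and "\<And>m. 0 < m \<Longrightarrow> \<exists>j<m. pal_factor u j m \<and> f m = f j + 1"
  shows "f m = PPL u m"
proof (induction m rule: less_induct)
  case (less m)
  show ?case
  proof (cases "m = 0")
    case False
    then obtain j where "j < m" "pal_factor u j m" "f m = f j + 1" using assms(3) by blast
    with less have "PPL u m \<le> f m" using PPL_le_pal_factor[of j m u] by simp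
    obtain j' where "j' < m" "pal_factor u j' m" "PPL u m = PPL u j' + 1"
      using PPL_last_pal_factor[of m u] \<open>m \<noteq> 0\<close> by auto
    with less have "f m \<le> PPL u m" using assms(2) by fastforce
    with \<open>PPL u m \<le> f m\<close> show ?thesis by simp
  qed (simp add: assms(1))
qed

abbreviation tm :: "nat \<Rightarrow> bool" where
  "tm \<equiv> thue_morse"

lemma length_tau [simp]: "length (tau w) = 4 * length w"
  by (induction w) (auto simp: tau_def tau_letter_def)

lemma length_tau_power: "length ((tau ^^ k) [False]) = 4 ^ k"
  by (induction k) auto

lemma tau_power_Suc_prefix: "\<exists>v. (tau ^^ Suc k) [False] = (tau ^^ k) [False] @ v"
proof (induction k)
  case 0
  show ?case by (simp add: tau_def tau_letter_def)
next
  case (Suc k)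
  then obtain v where "(tau ^^ Suc k) [False] = (tau ^^ k) [False] @ v" by blast
  then have "(tau ^^ Suc (Suc k)) [False] = (tau ^^ Suc k) [False] @ tau v"
    by (simp add: tau_def)
  then show ?case by blast
qed

lemma tau_power_prefix: "k \<le> k' \<Longrightarrow> \<exists>v. (tau ^^ k') [False] = (tau ^^ k) [False] @ v"
proof (induction k' rule: dec_induct)
  case (step k')
  then show ?case using tau_power_Suc_prefix[of k'] by force
qed simp

lemma less_four_power: "n < 4 ^ n"
proof -
  have "n < 2 ^ n" by simp
  also have "(2::nat) ^ n \<le> 4 ^ n" by (simp add: power_mono)
  finally show ?thesis .
qed

lemma thue_morse_eq_nth_tau_power:
  assumes "i < 4 ^ k"
  shows "tm i = (tau ^^ k) [False] ! i"
proof -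
  have nth_mono: "(tau ^^ k') [False] ! i = (tau ^^ k) [False] ! i"
    if "k \<le> k'" "i < 4 ^ k" for k k'
    using tau_power_prefix[OF \<open>k \<le> k'\<close>] \<open>i < 4 ^ k\<close> by (auto simp: nth_append length_tau_power)
  have "i < 4 ^ Suc i" using less_four_power[of i] by simp
  then show ?thesis
    unfolding thue_morse_def using assms nth_mono[of "Suc i" "max k (Suc i)"] nth_mono[of k "max k (Suc i)"]
    by simp
qed

lemma nth_tau: "q < length w \<Longrightarrow> r < 4 \<Longrightarrow> tau w ! (4 * q + r) = tau_letter (w ! q) ! r"
proof (induction w arbitrary: q)
  case (Cons x w)
  have "tau (x # w) = tau_letter x @ tau w" "length (tau_letter x) = 4"
    by (simp_all add: tau_def tau_letter_def)
  with Cons show ?case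
    by (cases q) (auto simp: nth_append)
qed simp

lemma thue_morse_4q_plus:
  assumes "r < 4"
  shows "tm (4 * q + r) = tau_letter (tm q) ! r"
  using assms less_four_power[of q] thue_morse_eq_nth_tau_power[of q q]
    thue_morse_eq_nth_tau_power[of "4 * q + r" "Suc q"]
  by (simp add: nth_tau length_tau_power)

lemma thue_morse_4q: "tm (4 * q) = tm q"
  and thue_morse_4q_1: "tm (4 * q + 1) = (\<not> tm q)"
  and thue_morse_4q_2: "tm (4 * q + 2) = (\<not> tm q)"
  and thue_morse_4q_3: "tm (4 * q + 3) = tm q"
  using thue_morse_4q_plus[of 0 q] thue_morse_4q_plus[of 1 q] thue_morse_4q_plus[of 2 q]
    thue_morse_4q_plus[of 3 q]
  by (simp_all add: tau_letter_def)

lemma thue_morse_4q_mirror_iff: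
  assumes "r < 4"
  shows "tm (4 * q + r) = tm (4 * q' + (3 - r)) \<longleftrightarrow> tm q = tm q'"
proof -
  have "r = 0 \<or> r = 1 \<or> r = 2 \<or> r = 3" using assms by auto
  then show ?thesis
    using thue_morse_4q_plus[of r q] thue_morse_4q_plus[of "3 - r" q'] assms
    by (elim disjE) (simp_all add: tau_letter_def)
qed

lemma thue_morse_double: "tm (2 * i) = tm i \<and> tm (2 * i + 1) = (\<not> tm i)"
proof (induction i rule: less_induct)
  case (less i)
  show ?case
  proof (cases "even i")
    case True
    then obtain p where "i = 2 * p" by blast
    moreover have "tm (2 * p) = tm p"
      using less[of p] \<open>i = 2 * p\<close> by (cases "p = 0") auto
    ultimately show ?thesis using thue_morse_4q[of p] thue_morse_4q_1[of p] by (simp add: mult.assoc)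
  next
    case False
    then obtain p where "i = 2 * p + 1" by (blast elim: oddE)
    moreover have "tm (2 * p + 1) = (\<not> tm p)"
      using less[of p] \<open>i = 2 * p + 1\<close> by simp
    moreover have "2 * (2 * p + 1) = 4 * p + 2" "2 * (2 * p + 1) + 1 = 4 * p + 3" by simp_all
    ultimately show ?thesis by (metis thue_morse_4q_2 thue_morse_4q_3)
  qed
qed

lemma thue_morse_even_neq_Suc: "even e \<Longrightarrow> tm e \<noteq> tm (e + 1)"
  using thue_morse_double by (auto elim: evenE)

lemma thue_morse_no_triple: "\<not> (tm x = tm (x + 1) \<and> tm (x + 1) = tm (x + 2))"
  using thue_morse_even_neq_Suc[of x] thue_morse_even_neq_Suc[of "x + 1"] by (cases "even x") auto

lemma thue_morse_no_palindrome_5: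
  assumes "tm c = tm (c + 4)"
  shows "tm (c + 1) \<noteq> tm (c + 3)"
proof (cases "even c")
  case True
  then obtain i where "c = 2 * i" by blast
  then have "c + 1 = 2 * i + 1" "c + 3 = 2 * (i + 1) + 1" "c + 4 = 2 * (i + 2)" by simp_all
  then show ?thesis
    using assms \<open>c = 2 * i\<close> thue_morse_double thue_morse_no_triple[of i]
    by (metis add_2_eq_Suc' Suc_eq_plus1)
next
  case False
  then obtain i where "c = 2 * i + 1" by (blast elim: oddE)
  then have "c + 1 = 2 * (i + 1)" "c + 3 = 2 * (i + 2)" "c + 4 = 2 * (i + 2) + 1" by simp_all
  then show ?thesis
    using assms \<open>c = 2 * i + 1\<close> thue_morse_double thue_morse_no_triple[of i]
    by (metis add_2_eq_Suc' Suc_eq_plus1)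
qed

lemma pal_factor_thue_morse_scale:
  assumes "pal_factor tm a b"
  shows "pal_factor tm (4 * a + c) (4 * b - c)"
  unfolding pal_factor_def
proof (intro allI impI)
  fix k assume k: "k < 4 * b - c - (4 * a + c)"
  define s r where "s = (c + k) div 4" and "r = (c + k) mod 4"
  then have "c + k = 4 * s + r" "r < 4" by simp_all
  with k have "s < b - a" by linarith
  with assms have "tm (a + s) = tm (b - 1 - s)" by (simp add: pal_factor_def)
  moreover have "4 * a + c + k = 4 * (a + s) + r" "4 * b - c - 1 - k = 4 * (b - 1 - s) + (3 - r)"
    using \<open>c + k = 4 * s + r\<close> \<open>r < 4\<close> k by auto
  ultimately show "tm (4 * a + c + k) = tm (4 * b - c - 1 - k)"
    using thue_morse_4q_mirror_iff[OF \<open>r < 4\<close>] by metis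
qed

lemma pal_factor_thue_morse_unscale:
  assumes "c < 4" "4 * a + c < 4 * b - c" "pal_factor tm (4 * a + c) (4 * b - c)"
  shows "pal_factor tm a b"
  unfolding pal_factor_def
proof (intro allI impI)
  fix s assume "s < b - a"
  \<comment> \<open>position r of the block tau(t[a + s]) lies inside the scaled factor\<close>
  define r where "r = (if s = 0 then c else 0)"
  define k where "k = 4 * s + r - c"
  have "r < 4" "k < 4 * b - c - (4 * a + c)"
    using assms(1,2) \<open>s < b - a\<close> unfolding r_def k_def by auto
  with assms(3) have "tm (4 * a + c + k) = tm (4 * b - c - 1 - k)" by (simp add: pal_factor_def)
  moreover have "4 * a + c + k = 4 * (a + s) + r" "4 * b - c - 1 - k = 4 * (b - 1 - s) + (3 - r)"
    using assms(1,2) \<open>s < b - a\<close> unfolding r_def k_def by auto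
  ultimately show "tm (a + s) = tm (b - 1 - s)"
    using thue_morse_4q_mirror_iff[OF \<open>r < 4\<close>] by metis
qed

lemma pal_factor_thue_morse_cases:
  assumes pal: "pal_factor tm j m" and "j < m"
  obtains "m = j + 1"
  | "m = j + 3" "tm j = tm (j + 2)"
  | a b c where "c < 4" "j = 4 * a + c" "m = 4 * b - c" "pal_factor tm a b"
proof -
  have mirror: "tm (j + k) = tm (m - 1 - k)" if "k < m - j" for k
    using pal that by (simp add: pal_factor_def)
  show ?thesis
  proof (cases "even (m - j)")
    case False
    then obtain h where h: "m - j = 2 * h + 1" by (blast elim: oddE)
    consider "h = 0" | "h = 1" | "2 \<le> h" by linarith
    then show ?thesis
    proof cases
      case 2
      with h mirror[of 0] that(2) show ?thesis by simp
    next
      case 3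
      define e where "e = j + h - 2"
      have "j + (h - 2) = e" "m - 1 - (h - 2) = e + 4" "j + (h - 1) = e + 1" "m - 1 - (h - 1) = e + 3"
        "h - 2 < m - j" "h - 1 < m - j"
        using h 3 unfolding e_def by auto
      then have "tm e = tm (e + 4)" "tm (e + 1) = tm (e + 3)"
        using mirror[of "h - 2"] mirror[of "h - 1"] by simp_all
      with thue_morse_no_palindrome_5 show ?thesis by blast
    qed (use h that(1) in simp)
  next
    case True
    then obtain h where h: "m - j = 2 * h" by blast
    define e where "e = j + h - 1"
    have "j + (h - 1) = e" "m - 1 - (h - 1) = e + 1" "h - 1 < m - j"
      using h \<open>j < m\<close> unfolding e_def by auto
    then have "tm e = tm (e + 1)" using mirror[of "h - 1"] by simp
    then have "odd e" using thue_morse_even_neq_Suc by blast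
    moreover have "e + 1 = j + h" using h \<open>j < m\<close> e_def by simp
    ultimately have "even (j + h)" by (metis even_Suc Suc_eq_plus1)
    then obtain t where "j + h = 2 * t" by blast
    with h \<open>j < m\<close> have "j + m = 4 * t" by simp
    define a c b where "a = j div 4" and "c = j mod 4" and "b = (m + c) div 4"
    have "(m + c) mod 4 = 0"
      unfolding c_def using \<open>j + m = 4 * t\<close> by (simp add: mod_add_right_eq add.commute)
    then have "c < 4" "j = 4 * a + c" "m = 4 * b - c"
      unfolding a_def b_def c_def by auto
    moreover from calculation have "pal_factor tm a b"
      using pal_factor_thue_morse_unscale \<open>j < m\<close> pal by metis
    ultimately show ?thesis using that(3) by blast
  qed
qed

lemma nat_mod_4_cases:
  fixes m :: nat
  obtains q where "m = 4 * q" | q where "m = 4 * q + 1" | q where "m = 4 * q + 2"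
  | q where "m = 4 * q + 3"
proof -
  have "m mod 4 = 0 \<or> m mod 4 = 1 \<or> m mod 4 = 2 \<or> m mod 4 = 3" by auto
  moreover have "m = 4 * (m div 4) + m mod 4" by simp
  ultimately show ?thesis using that by (elim disjE) (metis add_0_right)+
qed

abbreviation ppl :: "nat \<Rightarrow> nat" where
  "ppl \<equiv> PPL thue_morse"

definition ppl_formula :: "nat \<Rightarrow> nat" where
  "ppl_formula m =
    (let q = m div 4 in
     if m mod 4 = 0 then ppl q
     else if m mod 4 = 1 then ppl q + 1
     else if m mod 4 = 2 then min (ppl q) (ppl (q + 1)) + 2
     else ppl (q + 1) + 1)"

lemma ppl_formula_4q: "ppl_formula (4 * q) = ppl q"
  and ppl_formula_4q_1: "ppl_formula (4 * q + 1) = ppl q + 1"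
  and ppl_formula_4q_2: "ppl_formula (4 * q + 2) = min (ppl q) (ppl (q + 1)) + 2"
  and ppl_formula_4q_3: "ppl_formula (4 * q + 3) = ppl (q + 1) + 1"
proof -
  have "(4 * q + r) div 4 = q" "(4 * q + r) mod 4 = r" if "r < 4" for r
    using that by simp_all
  from this[of 1] this[of 2] this[of 3] show "ppl_formula (4 * q) = ppl q"
    "ppl_formula (4 * q + 1) = ppl q + 1" "ppl_formula (4 * q + 2) = min (ppl q) (ppl (q + 1)) + 2"
    "ppl_formula (4 * q + 3) = ppl (q + 1) + 1"
    by (simp_all add: ppl_formula_def)
qed

lemmas ppl_formula_4q_simps = ppl_formula_4q ppl_formula_4q_1 ppl_formula_4q_2 ppl_formula_4q_3

lemma ppl_formula_Suc_le: "ppl_formula (j + 1) \<le> ppl_formula j + 1"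
proof (cases j rule: nat_mod_4_cases)
  case (1 q)
  then have j1: "j + 1 = 4 * q + 1" by simp
  show ?thesis unfolding j1 unfolding 1 ppl_formula_4q_simps by simp
next
  case (2 q)
  then have j1: "j + 1 = 4 * q + 2" by simp
  show ?thesis unfolding j1 unfolding 2 ppl_formula_4q_simps by simp
next
  case (3 q)
  then have j1: "j + 1 = 4 * q + 3" by simp
  show ?thesis unfolding j1 unfolding 3 ppl_formula_4q_simps using PPL_Suc_le[of thue_morse q] by simp
next
  case (4 q)
  then have j1: "j + 1 = 4 * (q + 1)" by simp
  show ?thesis unfolding j1 unfolding 4 ppl_formula_4q_simps by simp
qed

lemma ppl_formula_le_triple:
  assumes "tm j = tm (j + 2)"
  shows "ppl_formula (j + 3) \<le> ppl_formula j + 1"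
proof (cases j rule: nat_mod_4_cases)
  case (1 q)
  then have j2: "j + 2 = 4 * q + 2" by simp
  from assms show ?thesis unfolding j2 unfolding 1 thue_morse_4q thue_morse_4q_2 by simp
next
  case (2 q)
  then have j3: "j + 3 = 4 * (q + 1)" by simp
  show ?thesis unfolding j3 unfolding 2 ppl_formula_4q_simps using PPL_Suc_le[of thue_morse q] by simp
next
  case (3 q)
  then have j3: "j + 3 = 4 * (q + 1) + 1" by simp
  show ?thesis unfolding j3 unfolding 3 ppl_formula_4q_simps using PPL_Suc_le[of thue_morse q] by simp
next
  case (4 q)
  then have j3: "j + 3 = 4 * (q + 1) + 2" by simp
  show ?thesis unfolding j3 unfolding 4 ppl_formula_4q_simps by simp
qed

lemma ppl_formula_le_scaled:
  assumes "c < 4" "4 * a + c < 4 * b - c" "pal_factor tm a b"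
  shows "ppl_formula (4 * b - c) \<le> ppl_formula (4 * a + c) + 1"
proof -
  have "a < b" using assms(2) by linarith
  then have outer: "ppl b \<le> ppl a + 1" using PPL_le_pal_factor assms(3) by blast
  have inner: "ppl (b - 1) \<le> ppl (a + 1) + 1" if "a + 1 < b"
    using PPL_le_inner_pal_factor[OF assms(3) that] .
  consider "c = 0" | "c = 1" | "c = 2" | "c = 3" using assms(1) by linarith
  then show ?thesis
  proof cases
    case 1
    then show ?thesis using outer by (simp add: ppl_formula_4q)
  next
    case 2
    then have m: "4 * b - c = 4 * (b - 1) + 3" using \<open>a < b\<close> by simp
    show ?thesis unfolding m unfolding 2 ppl_formula_4q_simps using outer \<open>a < b\<close> by simp
  next
    case 3
    then have m: "4 * b - c = 4 * (b - 1) + 2" and "a + 1 < b" using assms(2) by simp_all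
    show ?thesis unfolding m unfolding 3 ppl_formula_4q_simps using outer inner \<open>a + 1 < b\<close> by simp
  next
    case 4
    then have m: "4 * b - c = 4 * (b - 1) + 1" and "a + 1 < b" using assms(2) by simp_all
    show ?thesis unfolding m unfolding 4 ppl_formula_4q_simps using inner \<open>a + 1 < b\<close> by simp
  qed
qed

lemma ppl_formula_le_pal_factor:
  assumes "j < m" "pal_factor tm j m"
  shows "ppl_formula m \<le> ppl_formula j + 1"
  using assms(2,1)
proof (cases rule: pal_factor_thue_morse_cases)
  case 1
  then show ?thesis using ppl_formula_Suc_le by simp
next
  case 2
  then show ?thesis using ppl_formula_le_triple by simp
next
  case (3 a b c)
  then show ?thesis using ppl_formula_le_scaled assms(1) by simp
qed

lemma ppl_formula_last_pal_factor:
  assumes "0 < m"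
  obtains j where "j < m" "pal_factor tm j m" "ppl_formula m = ppl_formula j + 1"
proof (cases m rule: nat_mod_4_cases)
  case (1 q)
  with assms obtain a where "a < q" "pal_factor tm a q" "ppl q = ppl a + 1"
    using PPL_last_pal_factor[of q thue_morse] by auto
  moreover have "pal_factor tm (4 * a) (4 * q)"
    using pal_factor_thue_morse_scale[OF \<open>pal_factor tm a q\<close>, of 0] by simp
  ultimately show ?thesis using that[of "4 * a"] unfolding 1 ppl_formula_4q by simp
next
  case (2 q)
  then show ?thesis using that[of "4 * q"] pal_factor_Suc[of tm "4 * q"]
    unfolding 2 ppl_formula_4q ppl_formula_4q_1 by simp
next
  case (3 q)
  show ?thesis
  proof (cases "ppl q \<le> ppl (q + 1)")
    case True
    then show ?thesis using that[of "4 * q + 1"] pal_factor_Suc[of tm "4 * q + 1"]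
      unfolding 3 ppl_formula_4q_1 ppl_formula_4q_2 by simp
  next
    case False
    obtain a where a: "a < q + 1" "pal_factor tm a (q + 1)" "ppl (q + 1) = ppl a + 1"
      using PPL_last_pal_factor[of "q + 1" thue_morse] by auto
    with False have "a < q" by (cases "a = q") auto
    then have "ppl q \<le> ppl (a + 1) + 1" using PPL_le_inner_pal_factor[OF a(2)] by simp
    moreover have "pal_factor tm (4 * a + 2) (4 * q + 2)"
      using pal_factor_thue_morse_scale[OF a(2), of 2] by simp
    ultimately show ?thesis using that[of "4 * a + 2"] \<open>a < q\<close> a False
      unfolding 3 ppl_formula_4q_2 by simp
  qed
next
  case (4 q)
  obtain a where a: "a < q + 1" "pal_factor tm a (q + 1)" "ppl (q + 1) = ppl a + 1"
    using PPL_last_pal_factor[of "q + 1" thue_morse] by auto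
  moreover have "pal_factor tm (4 * a + 1) (4 * q + 3)"
    using pal_factor_thue_morse_scale[OF a(2), of 1] by (simp add: add.commute)
  ultimately show ?thesis using that[of "4 * a + 1"] unfolding 4 ppl_formula_4q_1 ppl_formula_4q_3
    by simp
qed

lemma PPL_thue_morse_eq_ppl_formula: "ppl m = ppl_formula m"
proof (rule PPL_eqI[symmetric])
  show "ppl_formula 0 = 0" using ppl_formula_4q[of 0] by simp
  show "ppl_formula m \<le> ppl_formula j + 1" if "j < m" "pal_factor tm j m" for j m
    using that by (rule ppl_formula_le_pal_factor)
  show "\<exists>j<m. pal_factor tm j m \<and> ppl_formula m = ppl_formula j + 1" if "0 < m" for m
    using ppl_formula_last_pal_factor[OF that] by blast
qed

theorem theorem4:
  fixes n :: nat
  shows "PPL thue_morse (4*n) = PPL thue_morse n \<and>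
         PPL thue_morse (4*n+1) = PPL thue_morse n + 1 \<and>
         PPL thue_morse (4*n+2) = min (PPL thue_morse n) (PPL thue_morse (n+1)) + 2 \<and>
         PPL thue_morse (4*n+3) = PPL thue_morse (n+1) + 1"
  using ppl_formula_4q_simps[of n] by (simp only: PPL_thue_morse_eq_ppl_formula)

end
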